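(* Let $G$ be a commutative group, $H$ a subgroup, $G'=G/H$ and $\varphi:G\to G'$ the natural homomorphism, $1<p<\infty$, and $f\in\ell^1(G)$ nonnegative. Define $f_\varphi$ on $G'$ by $f_\varphi(x)=\gamma_p\bigl(f|_{\varphi^{-1}(x)}\bigr)$. Then $\gamma_p(f)\ge\gamma_p(f_\varphi)$, where $\gamma_p(f_\varphi)$ is computed in $G'$.
   Context: For nonnegative functions $f,g$ on a commutative group $K$, $(f\star g)(x)=\max_t f(t)g(x-t)$. For nonnegative $f\in\ell^1(K)$ and $1/p+1/q=1$, $\gamma_p(f)=\inf_{g,h}\frac{\|f\star g\star h\|_1}{\|g\|_p\|h\|_q}$, infimum over nonzero nonnegative $g,h\in\ell^1(K)$. Here $f|_{\varphi^{-1}(x)}$ denotes the function on $G$ equal to $f$ on the coset $\varphi^{-1}(x)$ and $0$ elsewhere, and $\gamma_p$ of it is computed in $G$. *)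

theory Defs
  imports "HOL-Analysis.Analysis" "HOL-Algebra.Algebra"
begin

definition mconv :: "('a, 'b) monoid_scheme \<Rightarrow> ('a \<Rightarrow> real) \<Rightarrow> ('a \<Rightarrow> real) \<Rightarrow> 'a \<Rightarrow> real" where
  "mconv K f g x = (SUP t\<in>carrier K. f t * g (x \<otimes>\<^bsub>K\<^esub> inv\<^bsub>K\<^esub> t))"

definition l1_nonneg :: "('a, 'b) monoid_scheme \<Rightarrow> ('a \<Rightarrow> real) \<Rightarrow> bool" where
  "l1_nonneg K g \<longleftrightarrow> (\<forall>x\<in>carrier K. 0 \<le> g x) \<and> g summable_on carrier K"

definition lp_norm :: "('a, 'b) monoid_scheme \<Rightarrow> real \<Rightarrow> ('a \<Rightarrow> real) \<Rightarrow> real" where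
  "lp_norm K p g = (\<Sum>\<^sub>\<infinity>x\<in>carrier K. \<bar>g x\<bar> powr p) powr (1 / p)"

definition l1_norm :: "('a, 'b) monoid_scheme \<Rightarrow> ('a \<Rightarrow> real) \<Rightarrow> real" where
  "l1_norm K g = (\<Sum>\<^sub>\<infinity>x\<in>carrier K. \<bar>g x\<bar>)"

definition gamma_p :: "('a, 'b) monoid_scheme \<Rightarrow> real \<Rightarrow> ('a \<Rightarrow> real) \<Rightarrow> real" where
  "gamma_p K p f = Inf {l1_norm K (mconv K (mconv K f g) h) / (lp_norm K p g * lp_norm K (p / (p - 1)) h) | g h.
      l1_nonneg K g \<and> (\<exists>x\<in>carrier K. g x \<noteq> 0) \<and> l1_nonneg K h \<and> (\<exists>x\<in>carrier K. h x \<noteq> 0)}"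

end

theory Submission
  imports Defs
begin

text \<open>
  For nonnegative g and h on G consider on G/H the coset norms g'(c) = ||g restricted to c||_p
  and h'(c) = ||h restricted to c||_q, so that ||g'||_p = ||g||_p and ||h'||_q = ||h||_q.
  For cosets x, y, w with product z, the max-times convolution of the restrictions of f, g, h
  to x, y, w vanishes off z and is dominated by f \<star> g \<star> h; hence, by the definition of gamma_p,
  f_phi(x) g'(y) h'(w) is at most the sum of f \<star> g \<star> h over z.  Maximising over the triples
  with product z bounds (f_phi \<star> g' \<star> h')(z), and summing over z gives
  gamma_p(f_phi) ||g||_p ||h||_q <= ||f_phi \<star> g' \<star> h'||_1 <= ||f \<star> g \<star> h||_1.
\<close>

lemma member_le_infsum:
  fixes u :: "'a \<Rightarrow> real"
  assumes "u summable_on A" "\<And>y. y \<in> A \<Longrightarrow> 0 \<le> u y" "x \<in> A"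
  shows "u x \<le> infsum u A"
  using finite_sum_le_infsum[of u A "{x}"] assms by auto

lemma
  fixes w :: "'b \<Rightarrow> 'a \<Rightarrow> 'c::{topological_comm_monoid_add, t2_space}"
  assumes "finite F" "\<And>i. i \<in> F \<Longrightarrow> w i summable_on A"
  shows summable_on_sum: "(\<lambda>x. \<Sum>i\<in>F. w i x) summable_on A"
    and infsum_sum: "infsum (\<lambda>x. \<Sum>i\<in>F. w i x) A = (\<Sum>i\<in>F. infsum (w i) A)"
  using assms
  by (induction F rule: finite_induct) (auto simp: summable_on_add infsum_add)

lemma
  fixes u :: "'a \<Rightarrow> 'b::banach"
  assumes "u summable_on (\<Union>C)" "pairwise disjnt C"
  shows summable_on_partition: "(\<lambda>c. infsum u c) summable_on C"
    and infsum_partition: "infsum (\<lambda>c. infsum u c) C = infsum u (\<Union>C)"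
proof -
  have inj: "inj_on snd (Sigma C (\<lambda>c. c))"
    using assms(2) by (auto simp: inj_on_def pairwise_def disjnt_def)
  have image: "snd ` Sigma C (\<lambda>c. c) = \<Union>C"
    by force
  have summable: "(\<lambda>(c, y). u y) summable_on Sigma C (\<lambda>c. c)"
    using summable_on_reindex[OF inj, of u] assms(1) image by (simp add: case_prod_beta' o_def)
  then show "(\<lambda>c. infsum u c) summable_on C"
    using summable_on_Sigma_banach[of "\<lambda>c y. u y" C "\<lambda>c. c"] by simp
  have "infsum (\<lambda>c. infsum u c) C = infsum (\<lambda>(c, y). u y) (Sigma C (\<lambda>c. c))"
    using infsum_Sigma'_banach[of "\<lambda>c y. u y" C "\<lambda>c. c"] summable by simp
  also have "\<dots> = infsum u (\<Union>C)"
    using infsum_reindex[OF inj, of u] image by (simp add: case_prod_beta' o_def)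
  finally show "infsum (\<lambda>c. infsum u c) C = infsum u (\<Union>C)" .
qed

lemma lp_norm_nonneg: "0 \<le> lp_norm K r u"
  by (simp add: lp_norm_def)

lemma l1_norm_nonneg: "0 \<le> l1_norm K u"
  by (simp add: l1_norm_def infsum_nonneg)

lemma lp_norm_eq_0:
  assumes "\<And>x. x \<in> carrier K \<Longrightarrow> u x = 0"
  shows "lp_norm K r u = 0"
  using assms by (simp add: lp_norm_def infsum_0)

lemma l1_nonnegD:
  assumes "l1_nonneg K u"
  shows "\<And>x. x \<in> carrier K \<Longrightarrow> 0 \<le> u x" "u summable_on carrier K"
  using assms by (auto simp: l1_nonneg_def)

lemma l1_norm_eq_infsum:
  assumes "l1_nonneg K u"
  shows "l1_norm K u = infsum u (carrier K)"
  unfolding l1_norm_def using l1_nonnegD(1)[OF assms] by (intro infsum_cong) simp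

lemma
  assumes u: "l1_nonneg K u" and r: "1 \<le> r"
  shows summable_on_powr: "(\<lambda>x. \<bar>u x\<bar> powr r) summable_on carrier K"
    and lp_norm_le_l1_norm: "lp_norm K r u \<le> l1_norm K u"
proof -
  define S where "S = infsum u (carrier K)"
  have S: "0 \<le> S"
    unfolding S_def using l1_nonnegD[OF u] by (simp add: infsum_nonneg)
  have bound: "\<bar>u x\<bar> powr r \<le> u x * S powr (r - 1)" if x: "x \<in> carrier K" for x
  proof (cases "u x = 0")
    case False
    then have "0 < u x"
      using l1_nonnegD(1)[OF u x] by simp
    moreover have "u x \<le> S"
      unfolding S_def using member_le_infsum[OF l1_nonnegD(2)[OF u] l1_nonnegD(1)[OF u] x] .
    ultimately show ?thesis
      using r powr_add[of "u x" 1 "r - 1"] by (simp add: mult_left_mono powr_mono2)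
  qed simp
  have dominant: "(\<lambda>x. u x * S powr (r - 1)) summable_on carrier K"
    using summable_on_cmult_left[OF l1_nonnegD(2)[OF u]] by simp
  show summable: "(\<lambda>x. \<bar>u x\<bar> powr r) summable_on carrier K"
    by (rule summable_on_comparison_test[OF dominant]) (use bound in auto)
  have "infsum (\<lambda>x. \<bar>u x\<bar> powr r) (carrier K) \<le> infsum (\<lambda>x. u x * S powr (r - 1)) (carrier K)"
    by (rule infsum_mono[OF summable dominant bound])
  also have "\<dots> = S powr r"
    using S r powr_add[of S 1 "r - 1"] unfolding S_def by (cases "S = 0") (auto simp: infsum_cmult_left')
  finally have "lp_norm K r u \<le> (S powr r) powr (1 / r)"
    unfolding lp_norm_def using r by (intro powr_mono2) (auto intro: infsum_nonneg)
  also have "\<dots> = l1_norm K u"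
    using r S by (simp add: powr_powr S_def l1_norm_eq_infsum[OF u])
  finally show "lp_norm K r u \<le> l1_norm K u" .
qed

lemma lp_norm_pos:
  assumes u: "l1_nonneg K u" and r: "1 \<le> r" and x: "x \<in> carrier K" "u x \<noteq> 0"
  shows "0 < lp_norm K r u"
proof -
  have "0 < \<bar>u x\<bar> powr r"
    using x by simp
  also have "\<dots> \<le> infsum (\<lambda>x. \<bar>u x\<bar> powr r) (carrier K)"
    by (rule member_le_infsum[OF summable_on_powr[OF u r] _ x(1)]) simp
  finally show ?thesis
    unfolding lp_norm_def by simp
qed

lemma l1_nonneg_restrict:
  assumes "l1_nonneg K u"
  shows "l1_nonneg K (\<lambda>x. if P x then u x else 0)"
  using l1_nonnegD[OF assms] unfolding l1_nonneg_def
  by (auto intro: summable_on_comparison_test)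

lemma l1_norm_restrict:
  assumes "A \<subseteq> carrier K" "\<And>x. x \<in> A \<Longrightarrow> 0 \<le> u x"
  shows "l1_norm K (\<lambda>x. if x \<in> A then u x else 0) = infsum u A"
  unfolding l1_norm_def using assms by (intro infsum_cong_neutral) auto

lemma lp_norm_restrict_powr:
  assumes "A \<subseteq> carrier K" "0 < r"
  shows "lp_norm K r (\<lambda>x. if x \<in> A then u x else 0) powr r = (\<Sum>\<^sub>\<infinity>x\<in>A. \<bar>u x\<bar> powr r)"
proof -
  have "(\<Sum>\<^sub>\<infinity>x\<in>carrier K. \<bar>if x \<in> A then u x else 0\<bar> powr r) = (\<Sum>\<^sub>\<infinity>x\<in>A. \<bar>u x\<bar> powr r)"
    using assms by (intro infsum_cong_neutral) auto
  then show ?thesis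
    using assms(2) by (simp add: lp_norm_def powr_powr infsum_nonneg)
qed

context group
begin

lemma mconv_bdd_above:
  assumes u: "l1_nonneg G u" and v: "l1_nonneg G v" and a: "a \<in> carrier G"
  shows "bdd_above ((\<lambda>t. u t * v (a \<otimes> inv t)) ` carrier G)"
proof (rule bdd_aboveI2)
  fix t assume t: "t \<in> carrier G"
  show "u t * v (a \<otimes> inv t) \<le> infsum u (carrier G) * infsum v (carrier G)"
  proof (rule mult_mono)
    show "u t \<le> infsum u (carrier G)"
      using member_le_infsum[OF l1_nonnegD(2)[OF u] l1_nonnegD(1)[OF u] t] .
    show "v (a \<otimes> inv t) \<le> infsum v (carrier G)"
      using member_le_infsum[OF l1_nonnegD(2)[OF v] l1_nonnegD(1)[OF v]] t a by simp
  qed (use l1_nonnegD[OF u] l1_nonnegD[OF v] t a in \<open>auto intro: infsum_nonneg\<close>)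
qed

lemma mconv_ge:
  assumes "l1_nonneg G u" "l1_nonneg G v" "a \<in> carrier G" "t \<in> carrier G"
  shows "u t * v (a \<otimes> inv t) \<le> mconv G u v a"
  unfolding mconv_def using assms by (intro cSUP_upper mconv_bdd_above)

lemma mconv_nonneg:
  assumes u: "l1_nonneg G u" and v: "l1_nonneg G v" and a: "a \<in> carrier G"
  shows "0 \<le> mconv G u v a"
proof -
  have "0 \<le> u \<one> * v (a \<otimes> inv \<one>)"
    using l1_nonnegD(1)[OF u] l1_nonnegD(1)[OF v] a by simp
  also have "\<dots> \<le> mconv G u v a"
    by (rule mconv_ge[OF u v a]) simp
  finally show ?thesis .
qed

lemma summable_on_mconv_terms:
  assumes u: "l1_nonneg G u" and v: "l1_nonneg G v" and a: "a \<in> carrier G"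
  shows "(\<lambda>t. u t * v (a \<otimes> inv t)) summable_on carrier G"
proof (rule summable_on_comparison_test)
  show "(\<lambda>t. u t * infsum v (carrier G)) summable_on carrier G"
    by (rule summable_on_cmult_left[OF l1_nonnegD(2)[OF u]])
  fix t assume t: "t \<in> carrier G"
  show "u t * v (a \<otimes> inv t) \<le> u t * infsum v (carrier G)"
    using member_le_infsum[OF l1_nonnegD(2)[OF v] l1_nonnegD(1)[OF v]] t a l1_nonnegD(1)[OF u t]
    by (intro mult_left_mono) auto
  show "0 \<le> u t * v (a \<otimes> inv t)"
    using l1_nonnegD(1)[OF u] l1_nonnegD(1)[OF v] t a by simp
qed

lemma mconv_le_infsum:
  assumes u: "l1_nonneg G u" and v: "l1_nonneg G v" and a: "a \<in> carrier G"
  shows "mconv G u v a \<le> (\<Sum>\<^sub>\<infinity>t\<in>carrier G. u t * v (a \<otimes> inv t))"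
  unfolding mconv_def
proof (rule cSUP_least)
  fix t assume t: "t \<in> carrier G"
  show "u t * v (a \<otimes> inv t) \<le> (\<Sum>\<^sub>\<infinity>t\<in>carrier G. u t * v (a \<otimes> inv t))"
    by (rule member_le_infsum[OF summable_on_mconv_terms[OF u v a] _ t])
       (use l1_nonnegD(1)[OF u] l1_nonnegD(1)[OF v] a in auto)
qed auto

text \<open>Since (u \<star> v)(a) <= sum_t u(t) v(a t^-1), every finite partial sum of u \<star> v
  is at most ||u||_1 ||v||_1.\<close>
lemma l1_nonneg_mconv:
  assumes u: "l1_nonneg G u" and v: "l1_nonneg G v"
  shows "l1_nonneg G (mconv G u v)"
proof -
  define V where "V = infsum v (carrier G)"
  have partial_sums: "sum (mconv G u v) F \<le> infsum u (carrier G) * V"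
    if F: "finite F" "F \<subseteq> carrier G" for F
  proof -
    have "sum (mconv G u v) F \<le> (\<Sum>a\<in>F. \<Sum>\<^sub>\<infinity>t\<in>carrier G. u t * v (a \<otimes> inv t))"
      using F by (intro sum_mono mconv_le_infsum[OF u v]) auto
    also have "\<dots> = (\<Sum>\<^sub>\<infinity>t\<in>carrier G. \<Sum>a\<in>F. u t * v (a \<otimes> inv t))"
      using F summable_on_mconv_terms[OF u v] by (subst infsum_sum) auto
    also have "\<dots> \<le> (\<Sum>\<^sub>\<infinity>t\<in>carrier G. u t * V)"
    proof (rule infsum_mono)
      show "(\<lambda>t. \<Sum>a\<in>F. u t * v (a \<otimes> inv t)) summable_on carrier G"
        using F summable_on_mconv_terms[OF u v] by (intro summable_on_sum) auto
      show "(\<lambda>t. u t * V) summable_on carrier G"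
        by (rule summable_on_cmult_left[OF l1_nonnegD(2)[OF u]])
      fix t assume t: "t \<in> carrier G"
      have "inj_on (\<lambda>a. a \<otimes> inv t) F"
        using F t by (intro inj_onI) (metis subsetD inv_closed right_cancel)
      then have "(\<Sum>a\<in>F. v (a \<otimes> inv t)) = sum v ((\<lambda>a. a \<otimes> inv t) ` F)"
        by (simp add: sum.reindex)
      also have "\<dots> \<le> V"
        unfolding V_def
        by (rule finite_sum_le_infsum[OF l1_nonnegD(2)[OF v]]) (use F t l1_nonnegD(1)[OF v] in auto)
      finally show "(\<Sum>a\<in>F. u t * v (a \<otimes> inv t)) \<le> u t * V"
        using l1_nonnegD(1)[OF u t] by (simp add: sum_distrib_left[symmetric] mult_left_mono)
    qed
    also have "\<dots> = infsum u (carrier G) * V"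
      by (simp add: infsum_cmult_left')
    finally show ?thesis .
  qed
  show ?thesis
    unfolding l1_nonneg_def
    using mconv_nonneg[OF u v] partial_sums
    by (auto intro!: nonneg_bdd_above_summable_on bdd_aboveI)
qed

lemma mconv_mono:
  assumes u: "l1_nonneg G u" and v: "l1_nonneg G v"
    and u': "\<And>x. x \<in> carrier G \<Longrightarrow> 0 \<le> u' x \<and> u' x \<le> u x"
    and v': "\<And>x. x \<in> carrier G \<Longrightarrow> 0 \<le> v' x \<and> v' x \<le> v x"
    and a: "a \<in> carrier G"
  shows "mconv G u' v' a \<le> mconv G u v a"
  unfolding mconv_def
proof (rule cSUP_least)
  fix t assume t: "t \<in> carrier G"
  show "u' t * v' (a \<otimes> inv t) \<le> (SUP t\<in>carrier G. u t * v (a \<otimes> inv t))"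
  proof (rule cSUP_upper2[OF mconv_bdd_above[OF u v a] t])
    show "u' t * v' (a \<otimes> inv t) \<le> u t * v (a \<otimes> inv t)"
      using u'[OF t] v'[of "a \<otimes> inv t"] a t by (intro mult_mono) auto
  qed
qed auto

lemma l1_nonneg_indicator_one: "l1_nonneg G (indicator {\<one>})"
proof -
  have "(indicator {\<one>} :: 'a \<Rightarrow> real) summable_on carrier G \<longleftrightarrow>
        (indicator {\<one>} :: 'a \<Rightarrow> real) summable_on {\<one>}"
    by (rule summable_on_cong_neutral) auto
  then show ?thesis
    by (simp add: l1_nonneg_def)
qed

lemma lp_norm_indicator_one:
  assumes "0 < r"
  shows "lp_norm G r (indicator {\<one>}) = 1"
proof -
  have "(\<Sum>\<^sub>\<infinity>x\<in>carrier G. \<bar>indicator {\<one>} x\<bar> powr r) = (\<Sum>\<^sub>\<infinity>x\<in>{\<one>}. \<bar>indicator {\<one>} x :: real\<bar> powr r)"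
    by (rule infsum_cong_neutral) auto
  then show ?thesis
    by (simp add: lp_norm_def)
qed

lemma mconv_indicator_one:
  assumes w: "\<And>x. x \<in> carrier G \<Longrightarrow> 0 \<le> w x" and a: "a \<in> carrier G"
  shows "mconv G w (indicator {\<one>}) a = w a"
proof -
  have terms: "w t * indicator {\<one>} (a \<otimes> inv t) = (if t = a then w a else 0)"
    if t: "t \<in> carrier G" for t
    using t a inv_solve_right'[of \<one> a t] by (auto simp: indicator_def)
  have "mconv G w (indicator {\<one>}) a = (SUP t\<in>carrier G. if t = a then w a else 0)"
    unfolding mconv_def by (rule SUP_cong) (simp_all add: terms)
  also have "\<dots> = w a"
  proof (rule antisym)
    show "(SUP t\<in>carrier G. if t = a then w a else 0) \<le> w a"
      using w[OF a] by (intro cSUP_least) auto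
    show "w a \<le> (SUP t\<in>carrier G. if t = a then w a else 0)"
      using w[OF a] a by (intro cSUP_upper2[where x = a] bdd_aboveI[where M = "w a"]) auto
  qed
  finally show ?thesis .
qed

lemma gamma_p_le:
  assumes "l1_nonneg G g" "x \<in> carrier G" "g x \<noteq> 0"
    and "l1_nonneg G h" "y \<in> carrier G" "h y \<noteq> 0"
  shows "gamma_p G p f \<le>
           l1_norm G (mconv G (mconv G f g) h) / (lp_norm G p g * lp_norm G (p / (p - 1)) h)"
  unfolding gamma_p_def
proof (rule cInf_lower)
  show "bdd_below {l1_norm G (mconv G (mconv G f g) h) / (lp_norm G p g * lp_norm G (p / (p - 1)) h) |g h.
      l1_nonneg G g \<and> (\<exists>x\<in>carrier G. g x \<noteq> 0) \<and> l1_nonneg G h \<and> (\<exists>x\<in>carrier G. h x \<noteq> 0)}"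
    by (rule bdd_belowI[where m = 0]) (auto simp: l1_norm_nonneg lp_norm_nonneg)
qed (use assms in blast)

lemma gamma_p_geI:
  assumes "\<And>g h. l1_nonneg G g \<Longrightarrow> (\<exists>x\<in>carrier G. g x \<noteq> 0) \<Longrightarrow>
      l1_nonneg G h \<Longrightarrow> (\<exists>x\<in>carrier G. h x \<noteq> 0) \<Longrightarrow>
      c \<le> l1_norm G (mconv G (mconv G f g) h) / (lp_norm G p g * lp_norm G (p / (p - 1)) h)"
  shows "c \<le> gamma_p G p f"
  unfolding gamma_p_def
proof (rule cInf_greatest)
  show "{l1_norm G (mconv G (mconv G f g) h) / (lp_norm G p g * lp_norm G (p / (p - 1)) h) |g h.
      l1_nonneg G g \<and> (\<exists>x\<in>carrier G. g x \<noteq> 0) \<and> l1_nonneg G h \<and> (\<exists>x\<in>carrier G. h x \<noteq> 0)} \<noteq> {}"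
  proof -
    have "(indicator {\<one>} :: 'a \<Rightarrow> real) \<one> \<noteq> 0"
      by simp
    then show ?thesis
      using l1_nonneg_indicator_one one_closed by blast
  qed
qed (use assms in blast)

lemma gamma_p_nonneg: "0 \<le> gamma_p G p f"
  by (rule gamma_p_geI) (simp add: l1_norm_nonneg lp_norm_nonneg)

lemma gamma_p_le_l1_norm:
  assumes f: "\<And>x. x \<in> carrier G \<Longrightarrow> 0 \<le> f x" and p: "1 < p"
  shows "gamma_p G p f \<le> l1_norm G f"
proof -
  let ?e = "indicator {\<one>} :: 'a \<Rightarrow> real"
  have "gamma_p G p f \<le>
      l1_norm G (mconv G (mconv G f ?e) ?e) / (lp_norm G p ?e * lp_norm G (p / (p - 1)) ?e)"
    by (rule gamma_p_le[OF l1_nonneg_indicator_one _ _ l1_nonneg_indicator_one]) auto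
  also have "\<dots> = l1_norm G f"
    using p f by (simp add: lp_norm_indicator_one mconv_indicator_one mconv_nonneg
        l1_nonneg_indicator_one l1_norm_def cong: infsum_cong)
  finally show ?thesis .
qed

lemma gamma_p_mult_le:
  assumes g: "l1_nonneg G g" and h: "l1_nonneg G h"
  shows "gamma_p G p f * lp_norm G p g * lp_norm G (p / (p - 1)) h \<le>
           l1_norm G (mconv G (mconv G f g) h)"
proof (cases "lp_norm G p g = 0 \<or> lp_norm G (p / (p - 1)) h = 0")
  case True
  then show ?thesis
    using l1_norm_nonneg by auto
next
  case False
  then obtain x y where "x \<in> carrier G" "g x \<noteq> 0" "y \<in> carrier G" "h y \<noteq> 0"
    using lp_norm_eq_0 by metis
  then have "gamma_p G p f \<le>
      l1_norm G (mconv G (mconv G f g) h) / (lp_norm G p g * lp_norm G (p / (p - 1)) h)"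
    using gamma_p_le[OF g _ _ h] by blast
  moreover have "0 < lp_norm G p g * lp_norm G (p / (p - 1)) h"
    using False lp_norm_nonneg[of G p g] lp_norm_nonneg[of G "p / (p - 1)" h]
    by (intro mult_pos_pos) (simp_all add: less_le)
  ultimately show ?thesis
    by (simp add: pos_le_divide_eq mult.assoc)
qed

end

lemma (in comm_group) mconv_mconv_le:
  assumes u: "\<And>x. x \<in> carrier G \<Longrightarrow> 0 \<le> u x"
    and v: "\<And>x. x \<in> carrier G \<Longrightarrow> 0 \<le> v x"
    and w: "\<And>x. x \<in> carrier G \<Longrightarrow> 0 \<le> w x"
    and z: "z \<in> carrier G"
    and bound: "\<And>a b c. a \<in> carrier G \<Longrightarrow> b \<in> carrier G \<Longrightarrow> c \<in> carrier G \<Longrightarrow>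
      a \<otimes> b \<otimes> c = z \<Longrightarrow> u a * v b * w c \<le> B"
  shows "mconv G (mconv G u v) w z \<le> B"
  unfolding mconv_def[of G "mconv G u v"]
proof (rule cSUP_least)
  fix s assume s: "s \<in> carrier G"
  have B: "0 \<le> B"
    using bound[of \<one> \<one> z] u[of \<one>] v[of \<one>] w z
    by (smt (verit) l_one one_closed mult_nonneg_nonneg)
  show "mconv G u v s * w (z \<otimes> inv s) \<le> B"
  proof (cases "w (z \<otimes> inv s) = 0")
    case True
    then show ?thesis
      using B by simp
  next
    case False
    then have pos: "0 < w (z \<otimes> inv s)"
      using w[of "z \<otimes> inv s"] s z by simp
    have "mconv G u v s \<le> B / w (z \<otimes> inv s)"
      unfolding mconv_def
    proof (rule cSUP_least)
      fix t assume t: "t \<in> carrier G"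
      have "t \<otimes> (s \<otimes> inv t) = s" "s \<otimes> (z \<otimes> inv s) = z"
        using s t z by (simp_all add: m_comm[of _ "inv _"] m_assoc[symmetric])
      then have "t \<otimes> (s \<otimes> inv t) \<otimes> (z \<otimes> inv s) = z"
        by simp
      then show "u t * v (s \<otimes> inv t) \<le> B / w (z \<otimes> inv s)"
        using bound[of t "s \<otimes> inv t" "z \<otimes> inv s"] s t z pos by (simp add: pos_le_divide_eq)
    qed auto
    then show ?thesis
      using pos by (simp add: pos_le_divide_eq)
  qed
qed auto

lemma (in comm_group) mconv_mconv_restrict_eq_0:
  assumes u: "l1_nonneg G u" and v: "l1_nonneg G v" and w: "l1_nonneg G w"
    and z: "z \<in> carrier G" "z \<notin> S <#> T <#> U"
  shows "mconv G (mconv G (\<lambda>x. if x \<in> S then u x else 0) (\<lambda>x. if x \<in> T then v x else 0))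
           (\<lambda>x. if x \<in> U then w x else 0) z = 0"
    (is "mconv G (mconv G ?u ?v) ?w z = 0")
proof (rule antisym)
  show "mconv G (mconv G ?u ?v) ?w z \<le> 0"
  proof (rule mconv_mconv_le)
    fix a b c assume "a \<otimes> b \<otimes> c = z"
    then have "\<not> (a \<in> S \<and> b \<in> T \<and> c \<in> U)"
      using z(2) unfolding set_mult_def by blast
    then show "?u a * ?v b * ?w c \<le> 0"
      by auto
  qed (use z(1) l1_nonnegD(1)[OF u] l1_nonnegD(1)[OF v] l1_nonnegD(1)[OF w] in auto)
  show "0 \<le> mconv G (mconv G ?u ?v) ?w z"
    using u v w z(1) by (intro mconv_nonneg l1_nonneg_mconv l1_nonneg_restrict)
qed

definition coset_restrict :: "('a, 'b) monoid_scheme \<Rightarrow> 'a set \<Rightarrow> 'a set \<Rightarrow> ('a \<Rightarrow> real) \<Rightarrow> 'a \<Rightarrow> real"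
  where "coset_restrict G H c u = (\<lambda>a. if a \<in> carrier G \<and> H #>\<^bsub>G\<^esub> a = c then u a else 0)"

definition coset_lp_norm :: "('a, 'b) monoid_scheme \<Rightarrow> 'a set \<Rightarrow> real \<Rightarrow> ('a \<Rightarrow> real) \<Rightarrow> 'a set \<Rightarrow> real"
  where "coset_lp_norm G H r u = (\<lambda>c. lp_norm G r (coset_restrict G H c u))"

definition coset_gamma_p :: "('a, 'b) monoid_scheme \<Rightarrow> 'a set \<Rightarrow> real \<Rightarrow> ('a \<Rightarrow> real) \<Rightarrow> 'a set \<Rightarrow> real"
  where "coset_gamma_p G H p f = (\<lambda>c. gamma_p G p (coset_restrict G H c f))"

locale comm_group_quotient = comm_group +
  fixes H :: "'a set"
  assumes subgroup_H: "subgroup H G"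
begin

lemma comm_group_Mod: "comm_group (G Mod H)"
  by (rule abelian_FactGroup[OF subgroup_H])

lemma carrier_Mod: "carrier (G Mod H) = rcosets H"
  by (simp add: FactGroup_def)

lemma rcoset_subset_carrier: "c \<in> rcosets H \<Longrightarrow> c \<subseteq> carrier G"
  using rcosets_subset_PowG[OF subgroup_H] by blast

lemma coset_restrict_eq:
  assumes c: "c \<in> rcosets H"
  shows "coset_restrict G H c u = (\<lambda>a. if a \<in> c then u a else 0)"
proof -
  obtain b where b: "b \<in> carrier G" "c = H #> b"
    using c by (auto simp: RCOSETS_def)
  have "H #> a = c \<longleftrightarrow> a \<in> c" if a: "a \<in> carrier G" for a
    using repr_independence[of a H b] rcos_self[OF a subgroup_H] b subgroup_H by auto
  then show ?thesis
    using rcoset_subset_carrier[OF c] by (force simp: coset_restrict_def fun_eq_iff)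
qed

lemma
  fixes u :: "'a \<Rightarrow> real"
  assumes "u summable_on carrier G"
  shows summable_on_rcosets: "(\<lambda>c. infsum u c) summable_on rcosets H"
    and infsum_rcosets: "(\<Sum>\<^sub>\<infinity>c\<in>rcosets H. infsum u c) = infsum u (carrier G)"
  using summable_on_partition[of u "rcosets H"] infsum_partition[of u "rcosets H"]
    assms rcosets_part_G[OF subgroup_H] rcos_disjoint[OF subgroup_H] by simp_all

lemma l1_norm_coset_restrict:
  assumes "c \<in> rcosets H" "l1_nonneg G u"
  shows "l1_norm G (coset_restrict G H c u) = infsum u c"
  using assms rcoset_subset_carrier l1_nonnegD(1)[OF assms(2)]
  by (auto simp: coset_restrict_eq intro!: l1_norm_restrict)

lemma l1_nonneg_coset_restrict: "l1_nonneg G u \<Longrightarrow> l1_nonneg G (coset_restrict G H c u)"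
  unfolding coset_restrict_def by (rule l1_nonneg_restrict)

lemma l1_nonneg_coset_gamma_p:
  assumes f: "l1_nonneg G f" and p: "1 < p"
  shows "l1_nonneg (G Mod H) (coset_gamma_p G H p f)"
  unfolding l1_nonneg_def carrier_Mod
proof
  show "\<forall>c\<in>rcosets H. 0 \<le> coset_gamma_p G H p f c"
    by (simp add: coset_gamma_p_def gamma_p_nonneg)
  show "coset_gamma_p G H p f summable_on rcosets H"
  proof (rule summable_on_comparison_test)
    show "(\<lambda>c. infsum f c) summable_on rcosets H"
      by (rule summable_on_rcosets[OF l1_nonnegD(2)[OF f]])
    fix c assume c: "c \<in> rcosets H"
    have "gamma_p G p (coset_restrict G H c f) \<le> l1_norm G (coset_restrict G H c f)"
      using l1_nonnegD(1)[OF l1_nonneg_coset_restrict[OF f]] p by (intro gamma_p_le_l1_norm)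
    then show "coset_gamma_p G H p f c \<le> infsum f c"
      using l1_norm_coset_restrict[OF c f] by (simp add: coset_gamma_p_def)
  qed (simp add: coset_gamma_p_def gamma_p_nonneg)
qed

lemma l1_nonneg_coset_lp_norm:
  assumes g: "l1_nonneg G g" and r: "1 \<le> r"
  shows "l1_nonneg (G Mod H) (coset_lp_norm G H r g)"
  unfolding l1_nonneg_def carrier_Mod
proof
  show "\<forall>c\<in>rcosets H. 0 \<le> coset_lp_norm G H r g c"
    by (simp add: coset_lp_norm_def lp_norm_nonneg)
  show "coset_lp_norm G H r g summable_on rcosets H"
  proof (rule summable_on_comparison_test)
    show "(\<lambda>c. infsum g c) summable_on rcosets H"
      by (rule summable_on_rcosets[OF l1_nonnegD(2)[OF g]])
    fix c assume c: "c \<in> rcosets H"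
    have "lp_norm G r (coset_restrict G H c g) \<le> l1_norm G (coset_restrict G H c g)"
      by (rule lp_norm_le_l1_norm[OF l1_nonneg_coset_restrict[OF g] r])
    then show "coset_lp_norm G H r g c \<le> infsum g c"
      using l1_norm_coset_restrict[OF c g] by (simp add: coset_lp_norm_def)
  qed (simp add: coset_lp_norm_def lp_norm_nonneg)
qed

lemma lp_norm_coset_lp_norm:
  assumes g: "l1_nonneg G g" and r: "1 \<le> r"
  shows "lp_norm (G Mod H) r (coset_lp_norm G H r g) = lp_norm G r g"
proof -
  have "(\<Sum>\<^sub>\<infinity>c\<in>rcosets H. \<bar>coset_lp_norm G H r g c\<bar> powr r)
      = (\<Sum>\<^sub>\<infinity>c\<in>rcosets H. \<Sum>\<^sub>\<infinity>a\<in>c. \<bar>g a\<bar> powr r)"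
    using r rcoset_subset_carrier
    by (intro infsum_cong) (simp add: coset_lp_norm_def coset_restrict_eq lp_norm_nonneg
        lp_norm_restrict_powr)
  also have "\<dots> = (\<Sum>\<^sub>\<infinity>a\<in>carrier G. \<bar>g a\<bar> powr r)"
    by (rule infsum_rcosets[OF summable_on_powr[OF g r]])
  finally show ?thesis
    unfolding lp_norm_def carrier_Mod by simp
qed

lemma coset_triple_le:
  assumes f: "l1_nonneg G f" and g: "l1_nonneg G g" and h: "l1_nonneg G h"
    and x: "x \<in> rcosets H" and y: "y \<in> rcosets H" and w: "w \<in> rcosets H"
  shows "coset_gamma_p G H p f x * coset_lp_norm G H p g y * coset_lp_norm G H (p / (p - 1)) h w
           \<le> infsum (mconv G (mconv G f g) h) (x <#> y <#> w)"
proof -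
  define fx where "fx = (\<lambda>a. if a \<in> x then f a else 0)"
  define gy where "gy = (\<lambda>a. if a \<in> y then g a else 0)"
  define hw where "hw = (\<lambda>a. if a \<in> w then h a else 0)"
  note restricted = l1_nonneg_restrict[OF f] l1_nonneg_restrict[OF g] l1_nonneg_restrict[OF h]
  have fx: "l1_nonneg G fx" and gy: "l1_nonneg G gy" and hw: "l1_nonneg G hw"
    unfolding fx_def gy_def hw_def by (fact restricted)+
  have fgy: "l1_nonneg G (mconv G fx gy)"
    by (rule l1_nonneg_mconv[OF fx gy])
  have fg: "l1_nonneg G (mconv G f g)"
    by (rule l1_nonneg_mconv[OF f g])
  have z: "x <#> y <#> w \<subseteq> carrier G"
    using rcoset_subset_carrier x y w by (simp add: set_mult_closed)
  have "coset_gamma_p G H p f x * coset_lp_norm G H p g y * coset_lp_norm G H (p / (p - 1)) h w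
      \<le> l1_norm G (mconv G (mconv G fx gy) hw)"
    using gamma_p_mult_le[OF gy hw, of p fx] x y w
    by (simp add: coset_gamma_p_def coset_lp_norm_def coset_restrict_eq fx_def gy_def hw_def)
  also have "\<dots> = infsum (mconv G (mconv G fx gy) hw) (x <#> y <#> w)"
    unfolding l1_norm_def
    using z mconv_mconv_restrict_eq_0[OF f g h] mconv_nonneg[OF fgy hw]
    by (intro infsum_cong_neutral) (auto simp: fx_def gy_def hw_def)
  also have "\<dots> \<le> infsum (mconv G (mconv G f g) h) (x <#> y <#> w)"
  proof (rule infsum_mono)
    show "mconv G (mconv G fx gy) hw summable_on x <#> y <#> w"
      "mconv G (mconv G f g) h summable_on x <#> y <#> w"
      using z l1_nonnegD(2) l1_nonneg_mconv fgy hw fg h by (metis summable_on_subset_banach)+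
    fix a assume "a \<in> x <#> y <#> w"
    then have a: "a \<in> carrier G"
      using z by blast
    have "0 \<le> mconv G fx gy b \<and> mconv G fx gy b \<le> mconv G f g b" if "b \<in> carrier G" for b
      using that mconv_nonneg[OF fx gy] l1_nonnegD(1)[OF f] l1_nonnegD(1)[OF g]
      by (auto simp: fx_def gy_def intro!: mconv_mono[OF f g])
    then show "mconv G (mconv G fx gy) hw a \<le> mconv G (mconv G f g) h a"
      using a l1_nonnegD(1)[OF h] by (intro mconv_mono[OF fg h]) (auto simp: hw_def)
  qed
  finally show ?thesis .
qed

lemma mconv_Mod_le_infsum:
  assumes f: "l1_nonneg G f" and g: "l1_nonneg G g" and h: "l1_nonneg G h"
    and z: "z \<in> rcosets H"
  shows "mconv (G Mod H) (mconv (G Mod H) (coset_gamma_p G H p f) (coset_lp_norm G H p g))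
           (coset_lp_norm G H (p / (p - 1)) h) z
         \<le> infsum (mconv G (mconv G f g) h) z"
proof -
  interpret Q: comm_group "G Mod H"
    by (rule comm_group_Mod)
  show ?thesis
  proof (rule Q.mconv_mconv_le)
    fix a b c
    assume "a \<in> carrier (G Mod H)" "b \<in> carrier (G Mod H)" "c \<in> carrier (G Mod H)"
      and "a \<otimes>\<^bsub>G Mod H\<^esub> b \<otimes>\<^bsub>G Mod H\<^esub> c = z"
    then show "coset_gamma_p G H p f a * coset_lp_norm G H p g b * coset_lp_norm G H (p / (p - 1)) h c
        \<le> infsum (mconv G (mconv G f g) h) z"
      using coset_triple_le[OF f g h] by (auto simp: carrier_Mod)
  qed (use z in \<open>auto simp: carrier_Mod coset_gamma_p_def coset_lp_norm_def
      gamma_p_nonneg lp_norm_nonneg\<close>)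
qed

lemma l1_norm_mconv_Mod_le:
  assumes f: "l1_nonneg G f" and g: "l1_nonneg G g" and h: "l1_nonneg G h" and p: "1 < p"
  shows "l1_norm (G Mod H) (mconv (G Mod H) (mconv (G Mod H) (coset_gamma_p G H p f)
           (coset_lp_norm G H p g)) (coset_lp_norm G H (p / (p - 1)) h))
         \<le> l1_norm G (mconv G (mconv G f g) h)"
    (is "l1_norm (G Mod H) ?kQ \<le> l1_norm G ?k")
proof -
  interpret Q: comm_group "G Mod H"
    by (rule comm_group_Mod)
  have "1 \<le> p / (p - 1)"
    using p by simp
  then have kQ: "l1_nonneg (G Mod H) ?kQ"
    using p by (intro Q.l1_nonneg_mconv l1_nonneg_coset_gamma_p[OF f] l1_nonneg_coset_lp_norm g h) auto
  have k: "l1_nonneg G ?k"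
    using f g h by (intro l1_nonneg_mconv)
  have "l1_norm (G Mod H) ?kQ = infsum ?kQ (rcosets H)"
    using l1_norm_eq_infsum[OF kQ] by (simp add: carrier_Mod)
  also have "\<dots> \<le> (\<Sum>\<^sub>\<infinity>c\<in>rcosets H. infsum ?k c)"
    using l1_nonnegD(2)[OF kQ] summable_on_rcosets[OF l1_nonnegD(2)[OF k]] mconv_Mod_le_infsum[OF f g h]
    by (intro infsum_mono) (auto simp: carrier_Mod)
  also have "\<dots> = l1_norm G ?k"
    using infsum_rcosets[OF l1_nonnegD(2)[OF k]] l1_norm_eq_infsum[OF k] by simp
  finally show ?thesis .
qed

lemma gamma_p_Mod_mult_le:
  assumes f: "l1_nonneg G f" and g: "l1_nonneg G g" and h: "l1_nonneg G h" and p: "1 < p"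
  shows "gamma_p (G Mod H) p (coset_gamma_p G H p f) * lp_norm G p g * lp_norm G (p / (p - 1)) h
         \<le> l1_norm G (mconv G (mconv G f g) h)"
proof -
  interpret Q: comm_group "G Mod H"
    by (rule comm_group_Mod)
  have q: "1 \<le> p / (p - 1)"
    using p by simp
  have "gamma_p (G Mod H) p (coset_gamma_p G H p f) * lp_norm G p g * lp_norm G (p / (p - 1)) h
      = gamma_p (G Mod H) p (coset_gamma_p G H p f) * lp_norm (G Mod H) p (coset_lp_norm G H p g)
          * lp_norm (G Mod H) (p / (p - 1)) (coset_lp_norm G H (p / (p - 1)) h)"
    using p q by (simp add: lp_norm_coset_lp_norm[OF g] lp_norm_coset_lp_norm[OF h])
  also have "\<dots> \<le> l1_norm (G Mod H) (mconv (G Mod H) (mconv (G Mod H) (coset_gamma_p G H p f)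
      (coset_lp_norm G H p g)) (coset_lp_norm G H (p / (p - 1)) h))"
    using p q by (intro Q.gamma_p_mult_le l1_nonneg_coset_lp_norm g h) auto
  also have "\<dots> \<le> l1_norm G (mconv G (mconv G f g) h)"
    by (rule l1_norm_mconv_Mod_le[OF f g h p])
  finally show ?thesis .
qed

end

theorem mainTheorem12:
  fixes G :: "('a, 'b) monoid_scheme" and H :: "'a set" and p :: real and f :: "'a \<Rightarrow> real"
  assumes "comm_group G"
    and "subgroup H G"
    and "1 < p"
    and "l1_nonneg G f"
  shows "gamma_p G p f \<ge>
           gamma_p (G Mod H) p
             (\<lambda>c. gamma_p G p (\<lambda>a. if a \<in> carrier G \<and> r_coset G H a = c then f a else 0))"
proof -
  interpret comm_group_quotient G H
    using assms(1,2) by (simp add: comm_group_quotient_def comm_group_quotient_axioms_def)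
  note p = \<open>1 < p\<close> and f = \<open>l1_nonneg G f\<close>
  have "gamma_p (G Mod H) p (coset_gamma_p G H p f) \<le> gamma_p G p f"
  proof (rule gamma_p_geI)
    fix g h
    assume g: "l1_nonneg G g" "\<exists>x\<in>carrier G. g x \<noteq> 0"
      and h: "l1_nonneg G h" "\<exists>x\<in>carrier G. h x \<noteq> 0"
    have "1 \<le> p / (p - 1)"
      using p by simp
    then have "0 < lp_norm G p g * lp_norm G (p / (p - 1)) h"
      using g h p lp_norm_pos by (metis less_imp_le mult_pos_pos)
    then show "gamma_p (G Mod H) p (coset_gamma_p G H p f) \<le>
        l1_norm G (mconv G (mconv G f g) h) / (lp_norm G p g * lp_norm G (p / (p - 1)) h)"
      using gamma_p_Mod_mult_le[OF f g(1) h(1) p] by (simp add: pos_le_divide_eq mult.assoc)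
  qed
  then show ?thesis
    by (simp add: coset_gamma_p_def coset_restrict_def)
qed

end
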